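(* Let $s\ge1$. There is a three-layer Boolean threshold network with layer sizes $s$, $\lceil\log_2 s\rceil$, $s$ which maps $\mathbf{h}^i[s]$ to $\mathbf{h}^i[s]$ for every $i=0,\ldots,s-1$.
   Context: For integers $0\le i<s$, the step vector $\mathbf{h}^i[s]\in\{0,1\}^s$ has $\mathbf{h}^i[s]_j=1$ for $0\le j\le i$ and $0$ for $i<j<s$. A Boolean threshold function is a map $\{0,1\}^h\to\{0,1\}$, $\mathbf{u}\mapsto[\mathbf{w}\cdot\mathbf{u}\ge\theta]$ (value $1$ iff $\mathbf{w}\cdot\mathbf{u}\ge\theta$) with $\mathbf{w}\in\mathbb{Z}^h,\theta\in\mathbb{Z}$. A three-layer Boolean threshold network with layer sizes $p,q,p$ computes $\mathbf{u}\mapsto\mathbf{g}(\mathbf{f}(\mathbf{u}))$ where $\mathbf{f}:\{0,1\}^p\to\{0,1\}^q$ and $\mathbf{g}:\{0,1\}^q\to\{0,1\}^p$ have all coordinates Boolean threshold functions. *)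

theory Defs
  imports Complex_Main
begin

text \<open>Boolean vectors in {0,1}^h are modelled as functions nat => bool, of which only
  the coordinates 0..h-1 are relevant.\<close>

definition step_vec :: "nat \<Rightarrow> nat \<Rightarrow> (nat \<Rightarrow> bool)" where
  "step_vec s i = (\<lambda>j. j \<le> i \<and> j < s)"

definition threshold_fun :: "nat \<Rightarrow> ((nat \<Rightarrow> bool) \<Rightarrow> bool) \<Rightarrow> bool" where
  "threshold_fun h F \<longleftrightarrow> (\<exists>(w :: nat \<Rightarrow> int) (\<theta> :: int).
      \<forall>u. F u = ((\<Sum>j<h. w j * of_bool (u j)) \<ge> \<theta>))"

definition threshold_layer :: "nat \<Rightarrow> nat \<Rightarrow> ((nat \<Rightarrow> bool) \<Rightarrow> (nat \<Rightarrow> bool)) \<Rightarrow> bool" where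
  "threshold_layer p q F \<longleftrightarrow> (\<forall>k<q. threshold_fun p (\<lambda>u. F u k))"

end

theory Submission
  imports Defs
begin

text \<open>On the step vectors the input of a threshold unit only sees prefix sums of its weights,
  so choosing the weights as first differences of an arbitrary 0/1 sequence makes the unit output
  that sequence: the first layer can give the step vector of index i any code, in particular the
  binary expansion of i with ceiling(log2 s) bits. The second layer decodes: the j-th output unit
  tests whether the number with that binary expansion is at least j, which for i < s is exactly
  the j-th coordinate of the step vector of index i.\<close>

lemma sum_lessThan_Suc_first_differences:
  fixes a :: "nat \<Rightarrow> 'a :: ab_group_add"
  shows "(\<Sum>j<Suc n. a j - (if j = 0 then 0 else a (j - 1))) = a n"
  by (induction n) auto

lemma weighted_sum_step_vec:
  fixes w :: "nat \<Rightarrow> int"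
  assumes "i < s"
  shows "(\<Sum>j<s. w j * of_bool (step_vec s i j)) = (\<Sum>j<Suc i. w j)"
  using assms by (intro sum.mono_neutral_cong_right) (auto simp: step_vec_def)

lemma threshold_layer_encode_step_vec:
  fixes c :: "nat \<Rightarrow> nat \<Rightarrow> bool"
  shows "\<exists>f. threshold_layer s q f \<and> (\<forall>i<s. f (step_vec s i) = c i)"
proof -
  define w :: "nat \<Rightarrow> nat \<Rightarrow> int" where
    "w k j = of_bool (c j k) - (if j = 0 then 0 else of_bool (c (j - 1) k))" for k j
  define f where "f u k = ((\<Sum>j<s. w k j * of_bool (u j)) \<ge> 1)" for u k
  have "threshold_layer s q f"
    unfolding threshold_layer_def threshold_fun_def f_def by blast
  moreover have "f (step_vec s i) k = c i k" if "i < s" for i k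
    using sum_lessThan_Suc_first_differences[of "\<lambda>j. of_bool (c j k) :: int" i]
    by (simp add: f_def weighted_sum_step_vec[OF that] w_def)
  ultimately show ?thesis by blast
qed

lemma sum_bits_nat_eq_take_bit:
  "(\<Sum>k<m. 2 ^ k * of_bool (bit (i :: nat) k)) = int (take_bit m i)"
  by (simp add: take_bit_sum push_bit_eq_mult atLeast0LessThan mult.commute)

lemma threshold_layer_decode_binary:
  "\<exists>g. threshold_layer m n g \<and> (\<forall>i<2 ^ m. \<forall>j. g (bit i) j = (j \<le> i))"
proof -
  define g where "g v j = ((\<Sum>k<m. 2 ^ k * of_bool (v k)) \<ge> int j)" for v j
  have "threshold_layer m n g"
    unfolding threshold_layer_def threshold_fun_def g_def by blast
  moreover have "g (bit i) j = (j \<le> i)" if "i < 2 ^ m" for i j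
    using that by (simp add: g_def sum_bits_nat_eq_take_bit take_bit_nat_eq_self)
  ultimately show ?thesis by blast
qed

lemma le_two_power_ceiling_log:
  assumes "s \<ge> (1::nat)"
  shows "s \<le> 2 ^ nat \<lceil>log 2 (real s)\<rceil>"
proof -
  have "real s = 2 powr log 2 (real s)" using assms by simp
  also have "\<dots> \<le> 2 powr real (nat \<lceil>log 2 (real s)\<rceil>)"
    by (intro powr_mono) linarith+
  also have "\<dots> = real (2 ^ nat \<lceil>log 2 (real s)\<rceil>)"
    by (simp add: powr_realpow)
  finally show ?thesis by linarith
qed

theorem lemma20:
  fixes s :: nat
  assumes "s \<ge> 1"
  shows "\<exists>f g. threshold_layer s (nat \<lceil>log 2 (real s)\<rceil>) f
             \<and> threshold_layer (nat \<lceil>log 2 (real s)\<rceil>) s g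
             \<and> (\<forall>i<s. \<forall>j<s. g (f (step_vec s i)) j = step_vec s i j)"
proof -
  define m where "m = nat \<lceil>log 2 (real s)\<rceil>"
  obtain f where f: "threshold_layer s m f" and encode: "\<forall>i<s. f (step_vec s i) = bit i"
    using threshold_layer_encode_step_vec[of s m bit] by blast
  obtain g where g: "threshold_layer m s g" and decode: "\<forall>i<2 ^ m. \<forall>j. g (bit i) j = (j \<le> i)"
    using threshold_layer_decode_binary by blast
  have "s \<le> 2 ^ m"
    unfolding m_def using assms by (rule le_two_power_ceiling_log)
  then have "g (f (step_vec s i)) j = step_vec s i j" if "i < s" "j < s" for i j
    using that encode decode by (simp add: step_vec_def)
  then show ?thesis
    unfolding m_def[symmetric] using f g by blast
qed

end
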